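(* The logic $\mathsf{F}(\mathrm{LTL}[\mathsf{O}])$ can be exponentially more succinct than $\mathrm{LTL}[\mathsf{X},\mathsf{wX},\mathsf{F},\mathsf{G}]$ (over finite traces). That is, there exist finite sets of atomic propositions $AP_n$ and languages $\mathcal{L}_n \subseteq (2^{AP_n})^+$, $n \geq 1$, such that for every $n\ge 1$: (i) there is a formula $\phi \in \mathsf{F}(\mathrm{LTL}[\mathsf{O}])$ with $\mathcal{L}(\phi)=\mathcal{L}_n$ and $\mathrm{size}(\phi)$ bounded by a polynomial in $n$; and (ii) every formula $\psi\in \mathrm{LTL}[\mathsf{X},\mathsf{wX},\mathsf{F},\mathsf{G}]$ with $\mathcal{L}(\psi)=\mathcal{L}_n$ has $\mathrm{size}(\psi) \in 2^{\Omega(n)}$.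
   Context: Let $AP$ be a finite set of atomic propositions and $\Sigma=2^{AP}$. Formulae (in negation normal form) are generated by $\phi ::= p \mid \neg p \mid \phi\lor\phi\mid\phi\land\phi\mid \mathsf{X}\phi\mid\mathsf{wX}\phi\mid\mathsf{F}\phi\mid\mathsf{G}\phi\mid\mathsf{Y}\phi\mid\mathsf{wY}\phi\mid\mathsf{O}\phi\mid\mathsf{H}\phi$ with $p\in AP$. For a finite non-empty trace $\sigma=w_0\cdots w_m\in\Sigma^+$ (so $|\sigma|=m+1$, $\sigma[i]=w_i$) and a position $0\le i<|\sigma|$: $\sigma,i\models p$ iff $p\in\sigma[i]$; $\sigma,i\models\neg p$ iff $p\notin\sigma[i]$; $\lor,\land$ as usual; $\sigma,i\models\mathsf{X}\phi$ iff $i+1<|\sigma|$ and $\sigma,i+1\models\phi$; $\sigma,i\models\mathsf{wX}\phi$ iff $i+1=|\sigma|$ or $\sigma,i+1\models\phi$; $\sigma,i\models\mathsf{F}\phi$ iff $\sigma,j\models\phi$ for some $i\le j<|\sigma|$; $\sigma,i\models\mathsf{G}\phi$ iff $\sigma,j\models\phi$ for all $i\le j<|\sigma|$; $\sigma,i\models\mathsf{Y}\phi$ iff $i>0$ and $\sigma,i-1\models\phi$; $\sigma,i\models\mathsf{wY}\phi$ iff $i=0$ or $\sigma,i-1\models\phi$; $\sigma,i\models\mathsf{O}\phi$ iff $\sigma,j\models\phi$ for some $0\le j\le i$; $\sigma,i\models\mathsf{H}\phi$ iff $\sigma,j\models\phi$ for all $0\le j\le i$. $\sigma\models\phi$ means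 $\sigma,0\models\phi$, and $\mathcal{L}(\phi)=\{\sigma\in\Sigma^+:\sigma\models\phi\}$. Size: $\mathrm{size}(p)=\mathrm{size}(\neg p)=1$, $\mathrm{size}(\circ\phi)=\mathrm{size}(\phi)+1$ for each unary temporal operator $\circ$, $\mathrm{size}(\phi_1\circ\phi_2)=\mathrm{size}(\phi_1)+\mathrm{size}(\phi_2)+1$ for $\circ\in\{\land,\lor\}$. For a set $S$ of temporal operators, $\mathrm{LTL}[S]$ is the set of formulae all of whose temporal operators lie in $S$, and $\mathsf{F}(\mathrm{LTL}[S])$ is the set of formulae of the form $\mathsf{F}(\alpha)$ with $\alpha\in\mathrm{LTL}[S]$. *)

theory Defs
  imports Complex_Main
begin

datatype 'a ltl =
    Prop 'a | NProp 'a
  | Or "'a ltl" "'a ltl" | And "'a ltl" "'a ltl"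
  | Next "'a ltl" | WNext "'a ltl" | Fin "'a ltl" | Glob "'a ltl"
  | Yest "'a ltl" | WYest "'a ltl" | Once "'a ltl" | Hist "'a ltl"

fun sat :: "'a set list \<Rightarrow> nat \<Rightarrow> 'a ltl \<Rightarrow> bool" where
  "sat \<sigma> i (Prop p) = (p \<in> \<sigma> ! i)"
| "sat \<sigma> i (NProp p) = (p \<notin> \<sigma> ! i)"
| "sat \<sigma> i (Or a b) = (sat \<sigma> i a \<or> sat \<sigma> i b)"
| "sat \<sigma> i (And a b) = (sat \<sigma> i a \<and> sat \<sigma> i b)"
| "sat \<sigma> i (Next a) = (i + 1 < length \<sigma> \<and> sat \<sigma> (i + 1) a)"
| "sat \<sigma> i (WNext a) = (i + 1 = length \<sigma> \<or> sat \<sigma> (i + 1) a)"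
| "sat \<sigma> i (Fin a) = (\<exists>j. i \<le> j \<and> j < length \<sigma> \<and> sat \<sigma> j a)"
| "sat \<sigma> i (Glob a) = (\<forall>j. i \<le> j \<and> j < length \<sigma> \<longrightarrow> sat \<sigma> j a)"
| "sat \<sigma> i (Yest a) = (i > 0 \<and> sat \<sigma> (i - 1) a)"
| "sat \<sigma> i (WYest a) = (i = 0 \<or> sat \<sigma> (i - 1) a)"
| "sat \<sigma> i (Once a) = (\<exists>j. j \<le> i \<and> sat \<sigma> j a)"
| "sat \<sigma> i (Hist a) = (\<forall>j. j \<le> i \<longrightarrow> sat \<sigma> j a)"

fun size_ltl :: "'a ltl \<Rightarrow> nat" where
  "size_ltl (Prop p) = 1"
| "size_ltl (NProp p) = 1"
| "size_ltl (Or a b) = size_ltl a + size_ltl b + 1"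
| "size_ltl (And a b) = size_ltl a + size_ltl b + 1"
| "size_ltl (Next a) = size_ltl a + 1"
| "size_ltl (WNext a) = size_ltl a + 1"
| "size_ltl (Fin a) = size_ltl a + 1"
| "size_ltl (Glob a) = size_ltl a + 1"
| "size_ltl (Yest a) = size_ltl a + 1"
| "size_ltl (WYest a) = size_ltl a + 1"
| "size_ltl (Once a) = size_ltl a + 1"
| "size_ltl (Hist a) = size_ltl a + 1"

fun atoms :: "'a ltl \<Rightarrow> 'a set" where
  "atoms (Prop p) = {p}"
| "atoms (NProp p) = {p}"
| "atoms (Or a b) = atoms a \<union> atoms b"
| "atoms (And a b) = atoms a \<union> atoms b"
| "atoms (Next a) = atoms a"
| "atoms (WNext a) = atoms a"
| "atoms (Fin a) = atoms a"
| "atoms (Glob a) = atoms a"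
| "atoms (Yest a) = atoms a"
| "atoms (WYest a) = atoms a"
| "atoms (Once a) = atoms a"
| "atoms (Hist a) = atoms a"

datatype top = OpX | OpWX | OpF | OpG | OpY | OpWY | OpO | OpH

fun tops :: "'a ltl \<Rightarrow> top set" where
  "tops (Prop p) = {}"
| "tops (NProp p) = {}"
| "tops (Or a b) = tops a \<union> tops b"
| "tops (And a b) = tops a \<union> tops b"
| "tops (Next a) = insert OpX (tops a)"
| "tops (WNext a) = insert OpWX (tops a)"
| "tops (Fin a) = insert OpF (tops a)"
| "tops (Glob a) = insert OpG (tops a)"
| "tops (Yest a) = insert OpY (tops a)"
| "tops (WYest a) = insert OpWY (tops a)"
| "tops (Once a) = insert OpO (tops a)"
| "tops (Hist a) = insert OpH (tops a)"

definition LTL_over :: "top set \<Rightarrow> 'a ltl set" where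
  "LTL_over S = {\<phi>. tops \<phi> \<subseteq> S}"

definition F_of :: "top set \<Rightarrow> 'a ltl set" where
  "F_of S = {Fin \<alpha> | \<alpha>. \<alpha> \<in> LTL_over S}"

definition traces :: "'a set \<Rightarrow> 'a set list set" where
  "traces AP = {\<sigma>. \<sigma> \<noteq> [] \<and> (\<forall>w \<in> set \<sigma>. w \<subseteq> AP)}"

definition lang :: "'a set \<Rightarrow> 'a ltl \<Rightarrow> 'a set list set" where
  "lang AP \<phi> = {\<sigma> \<in> traces AP. sat \<sigma> 0 \<phi>}"

end

theory Submission
  imports Defs
begin

text \<open>
  The trace language of the succinct formula consists of the traces whose first, unmarked letter
  encodes a bit vector of length \<open>n\<close> that reappears at some later letter carrying the marker
  \<open>2 * n\<close>. With the past operator \<open>O\<close>, a later position can compare itself bitwise with the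
  first one, which takes a formula of size \<open>O(n)\<close>.

  A formula \<open>\<psi>\<close> using only \<open>X, wX, F, G\<close> is evaluated at the start of \<open>a # v\<close> from the
  letter \<open>a\<close> and the set of subformulas of \<open>\<psi>\<close> that hold at the start of \<open>v\<close>. Hence the
  languages \<open>{a. a # v \<Turnstile> \<psi>}\<close> take at most \<open>2 ^ size \<psi>\<close> values as \<open>v\<close> varies. For the
  succinct language, however, a suffix listing the members of a family \<open>\<F>\<close> of subsets of
  \<open>{0..<n}\<close> determines \<open>\<F>\<close> through the first letters it accepts, so there are \<open>2 ^ 2 ^ n\<close>
  such languages and \<open>size \<psi> \<ge> 2 ^ n\<close>.
\<close>

abbreviation future_ops :: "top set" where
  "future_ops \<equiv> {OpX, OpWX, OpF, OpG}"

lemma ex_Suc_le_iff: "(\<exists>j\<ge>Suc i. P j) \<longleftrightarrow> (\<exists>j\<ge>i. P (Suc j))"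
  by (metis Suc_le_D Suc_le_mono)

lemma all_Suc_le_iff: "(\<forall>j\<ge>Suc i. P j) \<longleftrightarrow> (\<forall>j\<ge>i. P (Suc j))"
  by (metis Suc_le_D Suc_le_mono)

lemma sat_Cons_Suc:
  "tops \<phi> \<subseteq> future_ops \<Longrightarrow> sat (a # v) (Suc i) \<phi> = sat v i \<phi>"
proof (induction \<phi> arbitrary: i)
  case (Glob x)
  then show ?case
    using all_Suc_le_iff[of i "\<lambda>j. j < length (a # v) \<longrightarrow> sat (a # v) j x"] by auto
qed (simp_all add: ex_Suc_le_iff)

lemma sat_Fin_unfold:
  "i < length \<sigma> \<Longrightarrow> sat \<sigma> i (Fin x) \<longleftrightarrow> sat \<sigma> i x \<or> (i + 1 < length \<sigma> \<and> sat \<sigma> (i + 1) (Fin x))"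
  by (simp add: Suc_le_eq) (blast dest: le_neq_implies_less intro: less_imp_le less_trans_Suc)

lemma sat_Glob_unfold:
  "i < length \<sigma> \<Longrightarrow> sat \<sigma> i (Glob x) \<longleftrightarrow> sat \<sigma> i x \<and> sat \<sigma> (i + 1) (Glob x)"
  by (simp add: Suc_le_eq) (blast dest: le_neq_implies_less intro: less_imp_le)

fun eval_head :: "'a set \<Rightarrow> ('a ltl \<Rightarrow> bool) \<Rightarrow> 'a ltl \<Rightarrow> bool" where
  "eval_head a P (Prop p) = (p \<in> a)"
| "eval_head a P (NProp p) = (p \<notin> a)"
| "eval_head a P (Or x y) = (eval_head a P x \<or> eval_head a P y)"
| "eval_head a P (And x y) = (eval_head a P x \<and> eval_head a P y)"
| "eval_head a P (Next x) = P x"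
| "eval_head a P (WNext x) = P x"
| "eval_head a P (Fin x) = (eval_head a P x \<or> P (Fin x))"
| "eval_head a P (Glob x) = (eval_head a P x \<and> P (Glob x))"
| "eval_head a P _ = False"

lemma sat_Cons_eq_eval_head:
  assumes "tops \<phi> \<subseteq> future_ops" and "v \<noteq> []"
  shows "sat (a # v) 0 \<phi> = eval_head a (sat v 0) \<phi>"
  using assms
proof (induction \<phi>)
  case (Fin x)
  then show ?case
    using sat_Fin_unfold[of 0 "a # v" x] sat_Cons_Suc[of "Fin x" a v 0] by simp
next
  case (Glob x)
  then show ?case
    using sat_Glob_unfold[of 0 "a # v" x] sat_Cons_Suc[of "Glob x" a v 0] by simp
qed (auto simp: sat_Cons_Suc)

fun subformulas :: "'a ltl \<Rightarrow> 'a ltl set" where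
  "subformulas (Prop p) = {Prop p}"
| "subformulas (NProp p) = {NProp p}"
| "subformulas (Or a b) = insert (Or a b) (subformulas a \<union> subformulas b)"
| "subformulas (And a b) = insert (And a b) (subformulas a \<union> subformulas b)"
| "subformulas (Next a) = insert (Next a) (subformulas a)"
| "subformulas (WNext a) = insert (WNext a) (subformulas a)"
| "subformulas (Fin a) = insert (Fin a) (subformulas a)"
| "subformulas (Glob a) = insert (Glob a) (subformulas a)"
| "subformulas (Yest a) = insert (Yest a) (subformulas a)"
| "subformulas (WYest a) = insert (WYest a) (subformulas a)"
| "subformulas (Once a) = insert (Once a) (subformulas a)"
| "subformulas (Hist a) = insert (Hist a) (subformulas a)"

lemma finite_subformulas: "finite (subformulas \<phi>)"
  by (induction \<phi>) auto

lemma subformulas_refl: "\<phi> \<in> subformulas \<phi>"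
  by (cases \<phi>) auto

lemma card_subformulas_le: "card (subformulas \<phi>) \<le> size_ltl \<phi>"
proof (induction \<phi>)
  case (Or a b)
  then show ?case
    using card_Un_le[of "subformulas a" "subformulas b"]
    by (simp add: card_insert_if finite_subformulas)
next
  case (And a b)
  then show ?case
    using card_Un_le[of "subformulas a" "subformulas b"]
    by (simp add: card_insert_if finite_subformulas)
qed (auto simp: card_insert_if finite_subformulas)

lemma eval_head_cong:
  "(\<And>\<chi>. \<chi> \<in> subformulas \<phi> \<Longrightarrow> P \<chi> = Q \<chi>) \<Longrightarrow> eval_head a P \<phi> = eval_head a Q \<phi>"
  by (induction \<phi>) (auto simp: subformulas_refl)

lemma card_head_residuals_le:
  assumes "tops \<psi> \<subseteq> future_ops" and "[] \<notin> V"
  shows "card ((\<lambda>v. {a. sat (a # v) 0 \<psi>}) ` V) \<le> 2 ^ size_ltl \<psi>"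
proof -
  define type where "type v = {\<chi> \<in> subformulas \<psi>. sat v 0 \<chi>}" for v
  define residual where "residual S = {a. eval_head a (\<lambda>\<chi>. \<chi> \<in> S) \<psi>}" for S
  have residual_type: "{a. sat (a # v) 0 \<psi>} = residual (type v)" if "v \<in> V" for v
  proof -
    have "v \<noteq> []" using that assms(2) by blast
    have "sat (a # v) 0 \<psi> = eval_head a (\<lambda>\<chi>. \<chi> \<in> type v) \<psi>" for a
      using sat_Cons_eq_eval_head[OF assms(1) \<open>v \<noteq> []\<close>, of a]
        eval_head_cong[of \<psi> "sat v 0" "\<lambda>\<chi>. \<chi> \<in> type v" a]
      by (simp add: type_def)
    then show ?thesis unfolding residual_def by simp
  qed
  have types: "type ` V \<subseteq> Pow (subformulas \<psi>)"
    by (auto simp: type_def)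
  have "(\<lambda>v. {a. sat (a # v) 0 \<psi>}) ` V = residual ` type ` V"
    using residual_type by (simp add: image_image cong: image_cong)
  also have "card \<dots> \<le> card (type ` V)"
    using types by (intro card_image_le) (simp add: finite_subset finite_subformulas)
  also have "\<dots> \<le> card (Pow (subformulas \<psi>))"
    using types by (simp add: card_mono finite_subformulas)
  also have "\<dots> \<le> 2 ^ size_ltl \<psi>"
    by (simp add: card_Pow finite_subformulas card_subformulas_le)
  finally show ?thesis .
qed

text \<open>Bit \<open>k < n\<close> of a set \<open>T\<close> is carried by the proposition \<open>2 * k\<close> if \<open>k \<in> T\<close> and by
  \<open>2 * k + 1\<close> otherwise; the proposition \<open>2 * n\<close> is the marker.\<close>

definition encode :: "nat \<Rightarrow> nat set \<Rightarrow> nat set" where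
  "encode n T = (\<lambda>k. 2 * k) ` (T \<inter> {..<n}) \<union> (\<lambda>k. 2 * k + 1) ` ({..<n} - T)"

lemma even_mem_encode: "k < n \<Longrightarrow> 2 * k \<in> encode n T \<longleftrightarrow> k \<in> T"
  unfolding encode_def by auto presburger

lemma odd_mem_encode: "k < n \<Longrightarrow> 2 * k + 1 \<in> encode n T \<longleftrightarrow> k \<notin> T"
  unfolding encode_def by auto presburger

lemma encode_subset: "encode n T \<subseteq> {..<2 * n}"
  unfolding encode_def by auto

text \<open>In the traces of interest the first letter is the only unmarked one, so the subformula
  \<open>Once (p \<and> \<not> marker)\<close> reads the proposition \<open>p\<close> off the first letter.\<close>

definition same_bit :: "nat \<Rightarrow> nat \<Rightarrow> nat ltl" where
  "same_bit n k =
     Or (And (Prop (2 * k)) (Once (And (Prop (2 * k)) (NProp (2 * n)))))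
        (And (Prop (2 * k + 1)) (Once (And (Prop (2 * k + 1)) (NProp (2 * n)))))"

fun match_upto :: "nat \<Rightarrow> nat \<Rightarrow> nat ltl" where
  "match_upto n 0 = Prop (2 * n)"
| "match_upto n (Suc k) = And (same_bit n k) (match_upto n k)"

definition repeat_formula :: "nat \<Rightarrow> nat ltl" where
  "repeat_formula n = Fin (match_upto n n)"

definition props :: "nat \<Rightarrow> nat set" where
  "props n = {..2 * n}"

lemma repeat_formula_in_F_of_Once: "repeat_formula n \<in> F_of {OpO}"
proof -
  have "tops (match_upto n k) \<subseteq> {OpO}" for k
    by (induction k) (auto simp: same_bit_def)
  then show ?thesis
    by (auto simp: repeat_formula_def F_of_def LTL_over_def)
qed

lemma atoms_repeat_formula: "atoms (repeat_formula n) \<subseteq> props n"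
proof -
  have "k \<le> n \<Longrightarrow> atoms (match_upto n k) \<subseteq> props n" for k
    by (induction k) (auto simp: same_bit_def props_def)
  then show ?thesis
    by (simp add: repeat_formula_def)
qed

lemma size_repeat_formula: "size_ltl (repeat_formula n) = 14 * n + 2"
proof -
  have "size_ltl (match_upto n k) = 14 * k + 1" for k
    by (induction k) (auto simp: same_bit_def)
  then show ?thesis
    by (simp add: repeat_formula_def)
qed

lemma sat_match_upto:
  "sat \<sigma> j (match_upto n k) \<longleftrightarrow> 2 * n \<in> \<sigma> ! j \<and> (\<forall>i<k. sat \<sigma> j (same_bit n i))"
  by (induction k) (auto simp: less_Suc_eq)

lemma sat_same_bit:
  assumes "2 * n \<notin> \<sigma> ! 0" and "\<And>i. 0 < i \<Longrightarrow> i \<le> j \<Longrightarrow> 2 * n \<in> \<sigma> ! i"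
  shows "sat \<sigma> j (same_bit n k) \<longleftrightarrow>
    (2 * k \<in> \<sigma> ! j \<and> 2 * k \<in> \<sigma> ! 0) \<or> (2 * k + 1 \<in> \<sigma> ! j \<and> 2 * k + 1 \<in> \<sigma> ! 0)"
proof -
  have "sat \<sigma> j (Once (And (Prop p) (NProp (2 * n)))) \<longleftrightarrow> p \<in> \<sigma> ! 0" for p
    using assms by (auto intro: exI[of _ 0]) (metis gr0I)
  then show ?thesis
    by (simp add: same_bit_def)
qed

definition marked :: "nat \<Rightarrow> nat set \<Rightarrow> nat set" where
  "marked n S = insert (2 * n) (encode n S)"

text \<open>The trailing empty letter keeps the suffix non-empty even for the empty family, as
  \<open>card_head_residuals_le\<close> requires.\<close>

definition witness_suffix :: "nat \<Rightarrow> nat set list \<Rightarrow> nat set list" where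
  "witness_suffix n xs = map (marked n) xs @ [{}]"

lemma Cons_witness_suffix_in_traces: "encode n T # witness_suffix n xs \<in> traces (props n)"
  using encode_subset by (fastforce simp: traces_def witness_suffix_def marked_def props_def)

lemma marked_encode_same_bit_iff:
  assumes "k < n"
  shows "(2 * k \<in> marked n S \<and> 2 * k \<in> encode n T) \<or>
    (2 * k + 1 \<in> marked n S \<and> 2 * k + 1 \<in> encode n T) \<longleftrightarrow> (k \<in> S \<longleftrightarrow> k \<in> T)"
  using assms even_mem_encode[of k n] odd_mem_encode[of k n] by (auto simp: marked_def)

lemma sat_witness_suffix_match_upto:
  assumes "T \<subseteq> {..<n}" and "set xs \<subseteq> Pow {..<n}" and "j < length xs + 2"
  shows "sat (encode n T # witness_suffix n xs) j (match_upto n n) \<longleftrightarrow>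
    (\<exists>i<length xs. j = Suc i \<and> xs ! i = T)"
proof -
  let ?\<sigma> = "encode n T # witness_suffix n xs"
  have marker_at: "2 * n \<in> ?\<sigma> ! j \<longleftrightarrow> (\<exists>i<length xs. j = Suc i)" if "j < length xs + 2" for j
    using that encode_subset
    by (cases j) (auto simp: witness_suffix_def marked_def nth_append less_Suc_eq)
  show ?thesis
  proof (cases "\<exists>i<length xs. j = Suc i")
    case True
    then obtain i where i: "i < length xs" "j = Suc i" by blast
    have unmarked_0: "2 * n \<notin> ?\<sigma> ! 0"
      using marker_at[of 0] by simp
    have marked_upto_j: "2 * n \<in> ?\<sigma> ! i'" if "0 < i'" "i' \<le> j" for i'
      using marker_at[of i'] that i gr0_conv_Suc by auto
    have "?\<sigma> ! j = marked n (xs ! i)" and "?\<sigma> ! 0 = encode n T"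
      using i by (simp_all add: witness_suffix_def nth_append)
    then have "sat ?\<sigma> j (match_upto n n) \<longleftrightarrow> (\<forall>k<n. k \<in> xs ! i \<longleftrightarrow> k \<in> T)"
      using marker_at[OF assms(3)] True
      by (simp add: sat_match_upto sat_same_bit[OF unmarked_0 marked_upto_j]
          marked_encode_same_bit_iff[simplified])
    also have "\<dots> \<longleftrightarrow> xs ! i = T"
      using assms(1,2) i(1) nth_mem by blast
    finally show ?thesis
      using i by auto
  next
    case False
    then show ?thesis using marker_at[OF assms(3)] sat_match_upto by blast
  qed
qed

lemma Cons_witness_suffix_in_lang:
  assumes "T \<subseteq> {..<n}" and "set xs \<subseteq> Pow {..<n}"
  shows "encode n T # witness_suffix n xs \<in> lang (props n) (repeat_formula n) \<longleftrightarrow> T \<in> set xs"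
proof -
  let ?\<sigma> = "encode n T # witness_suffix n xs"
  have "?\<sigma> \<in> lang (props n) (repeat_formula n) \<longleftrightarrow> (\<exists>j<length xs + 2. sat ?\<sigma> j (match_upto n n))"
    using Cons_witness_suffix_in_traces by (simp add: lang_def repeat_formula_def witness_suffix_def)
  also have "\<dots> \<longleftrightarrow> (\<exists>i<length xs. xs ! i = T)"
  proof
    assume "\<exists>j<length xs + 2. sat ?\<sigma> j (match_upto n n)"
    then show "\<exists>i<length xs. xs ! i = T"
      using sat_witness_suffix_match_upto[OF assms] by blast
  next
    assume "\<exists>i<length xs. xs ! i = T"
    then obtain i where "i < length xs" and "xs ! i = T"
      by blast
    then have "sat ?\<sigma> (Suc i) (match_upto n n)"
      using sat_witness_suffix_match_upto[OF assms, of "Suc i"] by auto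
    then show "\<exists>j<length xs + 2. sat ?\<sigma> j (match_upto n n)"
      using \<open>i < length xs\<close> by (intro exI[of _ "Suc i"]) auto
  qed
  also have "\<dots> \<longleftrightarrow> T \<in> set xs"
    by (auto simp: in_set_conv_nth)
  finally show ?thesis .
qed

lemma future_formula_for_repeat_size_ge:
  assumes "tops \<psi> \<subseteq> future_ops"
    and "lang (props n) \<psi> = lang (props n) (repeat_formula n)"
  shows "2 ^ n \<le> size_ltl \<psi>"
proof -
  define \<F> where "\<F> = Pow (Pow {..<n})"
  have "\<forall>F\<in>\<F>. \<exists>xs. set xs = F"
    unfolding \<F>_def by (meson PowD finite_Pow_iff finite_lessThan finite_list finite_subset)
  then obtain list_of where list_of: "\<And>F. F \<in> \<F> \<Longrightarrow> set (list_of F) = F"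
    by metis
  define residual where
    "residual F = {a. sat (a # witness_suffix n (list_of F)) 0 \<psi>}" for F
  have encode_mem_residual: "encode n T \<in> residual F \<longleftrightarrow> T \<in> F"
    if "T \<subseteq> {..<n}" and "F \<in> \<F>" for T F
  proof -
    let ?\<sigma> = "encode n T # witness_suffix n (list_of F)"
    have "encode n T \<in> residual F \<longleftrightarrow> ?\<sigma> \<in> lang (props n) \<psi>"
      using Cons_witness_suffix_in_traces by (simp add: residual_def lang_def)
    also have "\<dots> \<longleftrightarrow> T \<in> set (list_of F)"
      using assms(2) Cons_witness_suffix_in_lang[OF \<open>T \<subseteq> {..<n}\<close>] list_of \<open>F \<in> \<F>\<close>
      by (simp add: \<F>_def)
    finally show ?thesis
      using list_of \<open>F \<in> \<F>\<close> by simp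
  qed
  have "inj_on residual \<F>"
  proof (rule inj_on_inverseI)
    fix F assume "F \<in> \<F>"
    then show "{T. T \<subseteq> {..<n} \<and> encode n T \<in> residual F} = F"
      using encode_mem_residual unfolding \<F>_def by auto
  qed
  then have "2 ^ 2 ^ n = card (residual ` \<F>)"
    by (simp add: card_image card_Pow \<F>_def)
  also have "\<dots> \<le> 2 ^ size_ltl \<psi>"
  proof -
    have "[] \<notin> (\<lambda>F. witness_suffix n (list_of F)) ` \<F>"
      by (auto simp: witness_suffix_def)
    from card_head_residuals_le[OF assms(1) this] show ?thesis
      by (simp add: residual_def image_image)
  qed
  finally show ?thesis
    by (simp add: power_le_imp_le_exp)
qed

theorem theorem1:
  shows "\<exists>(AP :: nat \<Rightarrow> nat set) (L :: nat \<Rightarrow> nat set list set).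
    (\<forall>n\<ge>1. finite (AP n) \<and> L n \<subseteq> traces (AP n)) \<and>
    (\<exists>c k :: nat. \<forall>n\<ge>1. \<exists>\<phi>. \<phi> \<in> F_of {OpO} \<and> atoms \<phi> \<subseteq> AP n \<and>
        lang (AP n) \<phi> = L n \<and> size_ltl \<phi> \<le> c * n ^ k + c) \<and>
    (\<exists>(d :: real) N. d > 0 \<and> (\<forall>n\<ge>N. \<forall>\<psi>. \<psi> \<in> LTL_over {OpX, OpWX, OpF, OpG} \<and>
        atoms \<psi> \<subseteq> AP n \<and> lang (AP n) \<psi> = L n \<longrightarrow> real (size_ltl \<psi>) \<ge> 2 powr (d * real n)))"
proof (intro exI conjI allI impI)
  fix n :: nat
  show "finite (props n)" and "lang (props n) (repeat_formula n) \<subseteq> traces (props n)"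
    by (auto simp: props_def lang_def)
  show "repeat_formula n \<in> F_of {OpO}" and "atoms (repeat_formula n) \<subseteq> props n"
    and "lang (props n) (repeat_formula n) = lang (props n) (repeat_formula n)"
    by (simp_all add: repeat_formula_in_F_of_Once atoms_repeat_formula)
  show "size_ltl (repeat_formula n) \<le> 14 * n ^ 1 + 14"
    by (simp add: size_repeat_formula)
next
  fix n :: nat and \<psi> :: "nat ltl"
  assume "\<psi> \<in> LTL_over future_ops \<and> atoms \<psi> \<subseteq> props n \<and>
    lang (props n) \<psi> = lang (props n) (repeat_formula n)"
  then have "2 ^ n \<le> size_ltl \<psi>"
    by (auto simp: LTL_over_def intro: future_formula_for_repeat_size_ge)
  then show "2 powr (1 * real n) \<le> real (size_ltl \<psi>)"
    by (simp add: powr_realpow flip: of_nat_le_iff)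
qed (rule zero_less_one)

end
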